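(* Let $p(x)$ be a distribution on $\mathbb{R}^n$, $f_\theta:\mathbb{R}^n\to\mathcal{S}^{d-1}$ an encoder, $\tau>0$ a temperature and $t^->0$. For a query $x$ define $$\pi^-_\theta(x^-\mid x)=\frac{e^{-t^-\|f_\theta(x)-f_\theta(x^-)\|_2^2}\,p(x^-)}{\int e^{-t^-\|f_\theta(x)-f_\theta(x')\|_2^2}\,p(x')\,dx'},$$ the mutual information $$I(X;X^-)=\mathbb{E}_{x\sim p(x)}\mathbb{E}_{x^-\sim\pi^-_\theta(\cdot\mid x)}\Big[\ln\frac{\pi^-_\theta(x^-\mid x)}{p(x^-)}\Big],$$ the contrastive repulsion loss $$\mathcal{L}_{\mathrm{CR}}=\mathbb{E}_{x\sim p(x)}\mathbb{E}_{x^-\sim\pi^-_\theta(\cdot\mid x)}\big[-c(f_\theta(x),f_\theta(x^-))\big]\quad\text{with } c(z_1,z_2)=-z_1^\top z_2/\tau,$$ and the uniformity loss $$\mathcal{L}_{\mathrm{uniform}}=\mathbb{E}_{x\sim p(x)}\Big[\ln\mathbb{E}_{x^-\sim p(x^-)}e^{f_\theta(x^-)^\top f_\theta(x)/\tau}\Big].$$ Then $$\mathcal{L}_{\mathrm{uniform}}+I(X;X^-)\ \geqslant\ \mathcal{L}_{\mathrm{CR}}.$$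
   Context: $\mathcal{L}_{\mathrm{uniform}}$ is the limit, as the number $M$ of negative samples tends to infinity, of the contribution of the negative samples to the standard contrastive (InfoNCE) loss $\mathbb{E}\big[-\ln\frac{e^{f_\theta(x)^\top f_\theta(x^+)/\tau}}{e^{f_\theta(x)^\top f_\theta(x^+)/\tau}+\sum_{i=1}^M e^{f_\theta(x_i^-)^\top f_\theta(x)/\tau}}\big]$ (after subtracting $\ln M$), where negatives $x_i^-$ are drawn i.i.d. from $p$ independently of the query $x$. *)

theory Defs
  imports "HOL-Analysis.Analysis"
begin

definition negZ :: "(real^'n::finite \<Rightarrow> real) \<Rightarrow> (real^'n \<Rightarrow> real^'d::finite) \<Rightarrow> real \<Rightarrow> real^'n \<Rightarrow> real"
  where "negZ p f tn x = (\<integral>x'. exp (- tn * (norm (f x - f x'))\<^sup>2) * p x' \<partial>lborel)"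

definition pi_neg :: "(real^'n::finite \<Rightarrow> real) \<Rightarrow> (real^'n \<Rightarrow> real^'d::finite) \<Rightarrow> real \<Rightarrow> real^'n \<Rightarrow> real^'n \<Rightarrow> real"
  where "pi_neg p f tn x xm = exp (- tn * (norm (f x - f xm))\<^sup>2) * p xm / negZ p f tn x"

definition mutual_info :: "(real^'n::finite \<Rightarrow> real) \<Rightarrow> (real^'n \<Rightarrow> real^'d::finite) \<Rightarrow> real \<Rightarrow> real"
  where "mutual_info p f tn =
    (\<integral>x. p x * (\<integral>xm. pi_neg p f tn x xm * ln (pi_neg p f tn x xm / p xm) \<partial>lborel) \<partial>lborel)"

definition cost :: "real \<Rightarrow> real^'d::finite \<Rightarrow> real^'d \<Rightarrow> real"
  where "cost tau z1 z2 = - (z1 \<bullet> z2) / tau"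

definition L_CR :: "(real^'n::finite \<Rightarrow> real) \<Rightarrow> (real^'n \<Rightarrow> real^'d::finite) \<Rightarrow> real \<Rightarrow> real \<Rightarrow> real"
  where "L_CR p f tau tn =
    (\<integral>x. p x * (\<integral>xm. pi_neg p f tn x xm * (- cost tau (f x) (f xm)) \<partial>lborel) \<partial>lborel)"

definition L_uniform :: "(real^'n::finite \<Rightarrow> real) \<Rightarrow> (real^'n \<Rightarrow> real^'d::finite) \<Rightarrow> real \<Rightarrow> real"
  where "L_uniform p f tau =
    (\<integral>x. p x * ln (\<integral>xm. p xm * exp ((f xm \<bullet> f x) / tau) \<partial>lborel) \<partial>lborel)"

end

(* For a query x the negative distribution has density w = pi^-(. | x) / p with respect to p.
   With q = p w and s(x^-) = f(x)^T f(x^-) / tau, the inner integrals of L_CR, I(X;X^-) and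
   L_uniform are E_q s, KL(q || p) and ln E_p e^s, and the Donsker-Varadhan inequality
   E_q s <= KL(q || p) + ln E_p e^s, obtained by integrating the Fenchel-Young inequality
   w s <= w ln w - w + e^s against p, holds for every x. As f takes values on the sphere, all
   integrands are bounded, so the inequality can be integrated against p(x). *)

theory Submission
  imports Defs
begin

lemma fenchel_young_exp_ln:
  fixes w s :: real
  assumes "0 \<le> w"
  shows "w * s \<le> w * ln w - w + exp s"
proof (cases "w = 0")
  case False
  then have w_pos: "0 < w" using assms by simp
  have "ln (exp s / w) \<le> exp s / w - 1"
    using w_pos by (intro ln_le_minus_one) simp
  then have "w * (s - ln w) \<le> w * (exp s / w - 1)"
    using w_pos by (simp add: ln_div mult_left_mono)
  then show ?thesis using w_pos by (simp add: algebra_simps)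
qed simp

lemma abs_mult_ln_le:
  fixes w :: real
  assumes "0 \<le> w" "w \<le> W"
  shows "\<bar>w * ln w\<bar> \<le> 1 + W\<^sup>2"
proof (cases "w \<le> 1")
  case True
  have "- (w * ln w) \<le> 1 - w"
    using fenchel_young_exp_ln[OF assms(1), of 0] by simp
  moreover have "w * ln w \<le> 0"
    using True assms(1) by (cases "w = 0") (auto simp: mult_nonneg_nonpos)
  ultimately show ?thesis
    unfolding abs_le_iff using assms(1) zero_le_power2[of W] by linarith
next
  case False
  then have "0 \<le> ln w" "ln w \<le> w - 1" by (simp_all add: ln_le_minus_one)
  then have "0 \<le> w * ln w" "w * ln w \<le> w * (w - 1)"
    using False by (simp_all add: mult_left_mono)
  moreover have "w * w \<le> W\<^sup>2"
    using power_mono[OF assms(2) assms(1), of 2] by (simp add: power2_eq_square)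
  ultimately show ?thesis
    using False unfolding abs_le_iff right_diff_distrib mult_1_right by linarith
qed

locale probability_density =
  fixes M :: "'a measure" and p :: "'a \<Rightarrow> real"
  assumes integrable_density: "integrable M p"
    and density_nonneg: "\<And>x. 0 \<le> p x"
    and integral_density: "(\<integral>x. p x \<partial>M) = 1"
begin

lemma integrable_density_mult_bounded:
  assumes "g \<in> borel_measurable M" "\<And>x. x \<in> space M \<Longrightarrow> \<bar>g x\<bar> \<le> B"
  shows "integrable M (\<lambda>x. p x * g x)"
proof (rule Bochner_Integration.integrable_bound[where f = "\<lambda>x. B * p x"])
  show "integrable M (\<lambda>x. B * p x)" using integrable_density by simp
  show "(\<lambda>x. p x * g x) \<in> borel_measurable M"
    using integrable_density assms(1) by measurable
  have "\<bar>p x * g x\<bar> \<le> B * p x" if "x \<in> space M" for x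
    using mult_left_mono[OF assms(2)[OF that] density_nonneg[of x]] density_nonneg[of x]
    by (simp add: abs_mult mult.commute)
  then show "AE x in M. norm (p x * g x) \<le> norm (B * p x)"
    by (auto intro: order_trans[OF _ abs_ge_self])
qed

lemma integral_density_mult_bounds:
  assumes "g \<in> borel_measurable M" "\<And>x. x \<in> space M \<Longrightarrow> g x \<in> {a..b}"
  shows "(\<integral>x. p x * g x \<partial>M) \<in> {a..b}"
proof -
  have "\<bar>g x\<bar> \<le> \<bar>a\<bar> + \<bar>b\<bar>" if "x \<in> space M" for x
    using assms(2)[OF that] by auto
  then have g_int: "integrable M (\<lambda>x. p x * g x)"
    using assms(1) by (rule integrable_density_mult_bounded[rotated])
  have "(\<integral>x. p x * a \<partial>M) \<le> (\<integral>x. p x * g x \<partial>M)"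
    "(\<integral>x. p x * g x \<partial>M) \<le> (\<integral>x. p x * b \<partial>M)"
    using assms(2) density_nonneg
    by (intro integral_mono g_int integrable_mult_left integrable_density mult_left_mono; force)+
  then show ?thesis using integral_density by simp
qed

lemma abs_integral_density_mult_le:
  assumes "g \<in> borel_measurable M" "\<And>x. x \<in> space M \<Longrightarrow> \<bar>g x\<bar> \<le> B"
  shows "\<bar>\<integral>x. p x * g x \<partial>M\<bar> \<le> B"
proof -
  have "g x \<in> {- B..B}" if "x \<in> space M" for x
    using assms(2)[OF that] by auto
  then have "(\<integral>x. p x * g x \<partial>M) \<in> {- B..B}"
    using assms(1) by (rule integral_density_mult_bounds[rotated])
  then show ?thesis by auto
qed

lemma integral_density_exp_bounds:
  assumes "s \<in> borel_measurable M" "\<And>x. x \<in> space M \<Longrightarrow> \<bar>s x\<bar> \<le> S"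
  shows "(\<integral>x. p x * exp (s x) \<partial>M) \<in> {exp (- S)..exp S}"
proof (rule integral_density_mult_bounds)
  show "exp (s x) \<in> {exp (- S)..exp S}" if "x \<in> space M" for x
    using assms(2)[OF that] by auto
qed (use assms(1) in measurable)

lemma abs_ln_integral_density_exp_le:
  assumes "s \<in> borel_measurable M" "\<And>x. x \<in> space M \<Longrightarrow> \<bar>s x\<bar> \<le> S"
  shows "\<bar>ln (\<integral>x. p x * exp (s x) \<partial>M)\<bar> \<le> S"
proof -
  have "(\<integral>x. p x * exp (s x) \<partial>M) \<in> {exp (- S)..exp S}"
    by (rule integral_density_exp_bounds[OF assms])
  then have "ln (exp (- S)) \<le> ln (\<integral>x. p x * exp (s x) \<partial>M)"
    "ln (\<integral>x. p x * exp (s x) \<partial>M) \<le> ln (exp S)"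
    by (auto intro!: ln_mono simp del: ln_exp intro: less_le_trans[OF exp_gt_zero])
  then show ?thesis by simp
qed

lemma integral_density_mult_le_add:
  assumes "g \<in> borel_measurable M" "h \<in> borel_measurable M" "k \<in> borel_measurable M"
    and "\<And>x. x \<in> space M \<Longrightarrow> \<bar>g x\<bar> \<le> G"
    and "\<And>x. x \<in> space M \<Longrightarrow> \<bar>h x\<bar> \<le> H"
    and "\<And>x. x \<in> space M \<Longrightarrow> \<bar>k x\<bar> \<le> K"
    and "\<And>x. x \<in> space M \<Longrightarrow> g x \<le> h x + k x"
  shows "(\<integral>x. p x * g x \<partial>M)
    \<le> (\<integral>x. p x * h x \<partial>M) + (\<integral>x. p x * k x \<partial>M)"
proof -
  have int: "integrable M (\<lambda>x. p x * g x)" "integrable M (\<lambda>x. p x * h x)"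
    "integrable M (\<lambda>x. p x * k x)"
    using assms(1-6) by (auto intro: integrable_density_mult_bounded)
  have "p x * g x \<le> p x * h x + p x * k x" if "x \<in> space M" for x
    using mult_left_mono[OF assms(7)[OF that] density_nonneg] by (simp add: distrib_left)
  then have "(\<integral>x. p x * g x \<partial>M) \<le> (\<integral>x. p x * h x + p x * k x \<partial>M)"
    using int by (intro integral_mono) auto
  also have "\<dots> = (\<integral>x. p x * h x \<partial>M) + (\<integral>x. p x * k x \<partial>M)"
    using int by simp
  finally show ?thesis .
qed

lemma donsker_varadhan_inequality:
  assumes w_meas: "w \<in> borel_measurable M"
    and w_nonneg: "\<And>x. x \<in> space M \<Longrightarrow> 0 \<le> w x"
    and w_le: "\<And>x. x \<in> space M \<Longrightarrow> w x \<le> W"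
    and w_total: "(\<integral>x. p x * w x \<partial>M) = 1"
    and s_meas: "s \<in> borel_measurable M"
    and s_bounded: "\<And>x. x \<in> space M \<Longrightarrow> \<bar>s x\<bar> \<le> S"
  shows "(\<integral>x. p x * (w x * s x) \<partial>M)
    \<le> (\<integral>x. p x * (w x * ln (w x)) \<partial>M) + ln (\<integral>x. p x * exp (s x) \<partial>M)"
proof -
  define A where "A = (\<integral>x. p x * exp (s x) \<partial>M)"
  have A_pos: "0 < A"
    using integral_density_exp_bounds[OF s_meas s_bounded] unfolding A_def
    by (auto intro: less_le_trans[OF exp_gt_zero])
  have int_w: "integrable M (\<lambda>x. p x * w x)"
    using w_meas w_nonneg w_le by (intro integrable_density_mult_bounded[where B = W]) auto
  have "\<bar>exp (s x)\<bar> \<le> exp S" if "x \<in> space M" for x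
    using s_bounded[OF that] by simp
  then have int_exp: "integrable M (\<lambda>x. p x * exp (s x))"
    using s_meas by (intro integrable_density_mult_bounded) auto
  have int_ws: "integrable M (\<lambda>x. p x * (w x * s x))"
  proof (rule integrable_density_mult_bounded)
    show "\<bar>w x * s x\<bar> \<le> W * S" if "x \<in> space M" for x
      unfolding abs_mult using w_nonneg[OF that] w_le[OF that] s_bounded[OF that]
      by (intro mult_mono) auto
  qed (use w_meas s_meas in measurable)
  have int_wlnw: "integrable M (\<lambda>x. p x * (w x * ln (w x)))"
  proof (rule integrable_density_mult_bounded)
    show "\<bar>w x * ln (w x)\<bar> \<le> 1 + W\<^sup>2" if "x \<in> space M" for x
      using w_nonneg[OF that] w_le[OF that] by (rule abs_mult_ln_le)
  qed (use w_meas in measurable)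
  have "p x * (w x * s x) \<le> p x * (w x * ln (w x)) + p x * (exp (s x) / A - w x) + ln A * (p x * w x)"
    if "x \<in> space M" for x
  proof -
    have "w x * (s x - ln A) \<le> w x * ln (w x) - w x + exp (s x - ln A)"
      by (rule fenchel_young_exp_ln[OF w_nonneg[OF that]])
    then have "p x * (w x * (s x - ln A)) \<le> p x * (w x * ln (w x) - w x + exp (s x) / A)"
      using A_pos density_nonneg[of x] by (simp add: exp_diff mult_left_mono)
    then show ?thesis by (simp add: algebra_simps)
  qed
  then have "(\<integral>x. p x * (w x * s x) \<partial>M)
      \<le> (\<integral>x. p x * (w x * ln (w x)) + p x * (exp (s x) / A - w x) + ln A * (p x * w x) \<partial>M)"
    using int_ws int_wlnw int_exp int_w
    by (intro integral_mono) (auto simp: right_diff_distrib)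
  also have "\<dots> = (\<integral>x. p x * (w x * ln (w x)) \<partial>M) + ln A"
  proof -
    have "(\<integral>x. p x * (exp (s x) / A - w x) \<partial>M) = 0"
      using int_exp int_w A_pos w_total
      by (simp add: right_diff_distrib integral_diff A_def[symmetric])
    then show ?thesis
      using int_wlnw int_exp int_w w_total by (simp add: right_diff_distrib)
  qed
  finally show ?thesis unfolding A_def .
qed

lemma donsker_varadhan_kernel_inequality:
  assumes "sigma_finite_measure M"
    and w_meas: "case_prod w \<in> borel_measurable (M \<Otimes>\<^sub>M M)"
    and w_nonneg: "\<And>x y. x \<in> space M \<Longrightarrow> y \<in> space M \<Longrightarrow> 0 \<le> w x y"
    and w_le: "\<And>x y. x \<in> space M \<Longrightarrow> y \<in> space M \<Longrightarrow> w x y \<le> W"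
    and w_total: "\<And>x. x \<in> space M \<Longrightarrow> (\<integral>y. p y * w x y \<partial>M) = 1"
    and s_meas: "case_prod s \<in> borel_measurable (M \<Otimes>\<^sub>M M)"
    and s_bounded: "\<And>x y. x \<in> space M \<Longrightarrow> y \<in> space M \<Longrightarrow> \<bar>s x y\<bar> \<le> S"
  shows "(\<integral>x. p x * (\<integral>y. p y * (w x y * s x y) \<partial>M) \<partial>M)
    \<le> (\<integral>x. p x * (\<integral>y. p y * (w x y * ln (w x y)) \<partial>M) \<partial>M)
      + (\<integral>x. p x * ln (\<integral>y. p y * exp (s x y) \<partial>M) \<partial>M)"
proof -
  interpret sigma_finite_measure M by (rule assms(1))
  note [measurable] = w_meas s_meas integrable_density[THEN borel_measurable_integrable]
  have w_x_meas [measurable]: "w x \<in> borel_measurable M"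
    and s_x_meas [measurable]: "s x \<in> borel_measurable M" if "x \<in> space M" for x
    using that by measurable
  have "\<bar>\<integral>y. p y * (w x y * s x y) \<partial>M\<bar> \<le> W * S" if x: "x \<in> space M" for x
  proof (rule abs_integral_density_mult_le)
    show "\<bar>w x y * s x y\<bar> \<le> W * S" if "y \<in> space M" for y
      unfolding abs_mult using w_nonneg[OF x that] w_le[OF x that] s_bounded[OF x that]
      by (intro mult_mono) auto
  qed (use x in measurable)
  moreover have "\<bar>\<integral>y. p y * (w x y * ln (w x y)) \<partial>M\<bar> \<le> 1 + W\<^sup>2"
    if x: "x \<in> space M" for x
  proof (rule abs_integral_density_mult_le)
    show "\<bar>w x y * ln (w x y)\<bar> \<le> 1 + W\<^sup>2" if "y \<in> space M" for y
      using w_nonneg[OF x that] w_le[OF x that] by (rule abs_mult_ln_le)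
  qed (use x in measurable)
  moreover have "\<bar>ln (\<integral>y. p y * exp (s x y) \<partial>M)\<bar> \<le> S"
    if x: "x \<in> space M" for x
    using s_x_meas[OF x] s_bounded[OF x] by (rule abs_ln_integral_density_exp_le)
  moreover have "(\<integral>y. p y * (w x y * s x y) \<partial>M)
      \<le> (\<integral>y. p y * (w x y * ln (w x y)) \<partial>M) + ln (\<integral>y. p y * exp (s x y) \<partial>M)"
    if x: "x \<in> space M" for x
    using w_x_meas[OF x] w_nonneg[OF x] w_le[OF x] w_total[OF x] s_x_meas[OF x] s_bounded[OF x]
    by (rule donsker_varadhan_inequality)
  ultimately show ?thesis
    by (intro integral_density_mult_le_add) measurable
qed

end

lemma abs_inner_le_one:
  fixes u v :: "'a::real_inner"
  assumes "norm u = 1" "norm v = 1"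
  shows "\<bar>u \<bullet> v\<bar> \<le> 1"
  using Cauchy_Schwarz_ineq2[of u v] assms by simp

lemma norm_diff_power2_le_four:
  fixes u v :: "'a::real_normed_vector"
  assumes "norm u = 1" "norm v = 1"
  shows "(norm (u - v))\<^sup>2 \<le> 4"
proof -
  have "norm (u - v) \<le> 2" using norm_triangle_ineq4[of u v] assms by simp
  then show ?thesis using power_mono[of "norm (u - v)" 2 2] by simp
qed

definition neg_ratio :: "(real^'n::finite \<Rightarrow> real) \<Rightarrow> (real^'n \<Rightarrow> real^'d::finite) \<Rightarrow> real
    \<Rightarrow> real^'n \<Rightarrow> real^'n \<Rightarrow> real"
  where "neg_ratio p f tn x xm = exp (- tn * (norm (f x - f xm))\<^sup>2) / negZ p f tn x"

lemma pi_neg_eq_mult_neg_ratio: "pi_neg p f tn x xm = p xm * neg_ratio p f tn x xm"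
  unfolding pi_neg_def neg_ratio_def by simp

lemma mutual_info_eq_neg_ratio:
  "mutual_info p f tn =
    (\<integral>x. p x *
      (\<integral>xm. p xm * (neg_ratio p f tn x xm * ln (neg_ratio p f tn x xm)) \<partial>lborel) \<partial>lborel)"
proof -
  have "pi_neg p f tn x xm * ln (pi_neg p f tn x xm / p xm)
      = p xm * (neg_ratio p f tn x xm * ln (neg_ratio p f tn x xm))" for x xm
    unfolding pi_neg_eq_mult_neg_ratio by (cases "p xm = 0") auto
  then show ?thesis unfolding mutual_info_def by simp
qed

lemma L_CR_eq_neg_ratio:
  "L_CR p f tau tn =
    (\<integral>x. p x *
      (\<integral>xm. p xm * (neg_ratio p f tn x xm * ((f x \<bullet> f xm) / tau)) \<partial>lborel) \<partial>lborel)"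
  unfolding L_CR_def cost_def pi_neg_eq_mult_neg_ratio by (simp add: mult.assoc)

lemma L_uniform_eq:
  "L_uniform p f tau =
    (\<integral>x. p x * ln (\<integral>xm. p xm * exp ((f x \<bullet> f xm) / tau) \<partial>lborel) \<partial>lborel)"
  unfolding L_uniform_def by (simp add: inner_commute)

context
  fixes p :: "real^'n::finite \<Rightarrow> real" and f :: "real^'n \<Rightarrow> real^'d::finite" and tn :: real
  assumes p_density: "probability_density lborel p"
    and f_meas: "f \<in> borel_measurable lborel"
    and f_sphere: "\<And>x. norm (f x) = 1"
    and tn_pos: "0 < tn"
begin

interpretation probability_density lborel p by (rule p_density)

lemma negZ_ge: "exp (- 4 * tn) \<le> negZ p f tn x"
proof -
  have "exp (- tn * (norm (f x - f y))\<^sup>2) \<in> {exp (- 4 * tn)..1}" for y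
    using norm_diff_power2_le_four[OF f_sphere f_sphere, of x y] tn_pos by simp
  then have "(\<integral>y. p y * exp (- tn * (norm (f x - f y))\<^sup>2) \<partial>lborel)
      \<in> {exp (- 4 * tn)..1}"
    using f_meas by (intro integral_density_mult_bounds) auto
  then show ?thesis unfolding negZ_def by (simp add: mult.commute)
qed

lemma negZ_pos: "0 < negZ p f tn x"
  using negZ_ge[of x] by (rule less_le_trans[OF exp_gt_zero])

lemma neg_ratio_nonneg: "0 \<le> neg_ratio p f tn x xm"
  unfolding neg_ratio_def using negZ_pos[of x] by simp

lemma neg_ratio_le: "neg_ratio p f tn x xm \<le> exp (4 * tn)"
proof -
  have "exp (- tn * (norm (f x - f xm))\<^sup>2) \<le> 1" using tn_pos by simp
  then have "neg_ratio p f tn x xm \<le> 1 / exp (- 4 * tn)"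
    unfolding neg_ratio_def using negZ_ge[of x] by (intro frac_le) auto
  then show ?thesis by (simp add: exp_minus field_simps)
qed

lemma integral_density_mult_neg_ratio: "(\<integral>xm. p xm * neg_ratio p f tn x xm \<partial>lborel) = 1"
proof -
  have "(\<integral>xm. p xm * neg_ratio p f tn x xm \<partial>lborel) = negZ p f tn x / negZ p f tn x"
    unfolding neg_ratio_def negZ_def by (simp add: mult.commute)
  then show ?thesis using negZ_pos[of x] by simp
qed

end

theorem lemma3:
  fixes p :: "real^'n::finite \<Rightarrow> real"
    and f :: "real^'n \<Rightarrow> real^'d::finite"
    and tau tn :: real
  assumes p_meas: "p \<in> borel_measurable lborel"
    and p_nonneg: "\<And>x. p x \<ge> 0"
    and p_int: "integrable lborel p"
    and p_total: "(\<integral>x. p x \<partial>lborel) = 1"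
    and f_meas: "f \<in> borel_measurable lborel"
    and f_sphere: "\<And>x. norm (f x) = 1"
    and tau_pos: "tau > 0"
    and tn_pos: "tn > 0"
  shows "L_uniform p f tau + mutual_info p f tn \<ge> L_CR p f tau tn"
proof -
  have p_density: "probability_density lborel p"
    using p_nonneg p_int p_total by unfold_locales
  note [measurable] = p_meas f_meas
  have "L_CR p f tau tn \<le> mutual_info p f tn + L_uniform p f tau"
    unfolding L_CR_eq_neg_ratio mutual_info_eq_neg_ratio L_uniform_eq
  proof (rule probability_density.donsker_varadhan_kernel_inequality
      [where W = "exp (4 * tn)", OF p_density lborel.sigma_finite_measure_axioms])
    show "(\<lambda>(x, xm). neg_ratio p f tn x xm) \<in> borel_measurable (lborel \<Otimes>\<^sub>M lborel)"
      unfolding neg_ratio_def negZ_def by measurable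
    show "(\<lambda>(x, xm). (f x \<bullet> f xm) / tau) \<in> borel_measurable (lborel \<Otimes>\<^sub>M lborel)"
      by measurable
    show "\<bar>(f x \<bullet> f xm) / tau\<bar> \<le> 1 / tau" for x xm
      using abs_inner_le_one[OF f_sphere f_sphere, of x xm] tau_pos
      by (simp add: abs_div divide_right_mono)
  qed (simp_all add: neg_ratio_nonneg neg_ratio_le integral_density_mult_neg_ratio
      p_density f_meas f_sphere tn_pos)
  then show ?thesis by simp
qed

end
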